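(* Let $G_7$ be the graph on vertex set $\{0,1,\dots,6\}$ with edge set $\{01,12,23,34,45,56,60,03,04,13,14,63,64,25\}$. Then $\beta(G_7,\mathbf 1)=\alpha(G_7,\mathbf 1)=2$, where $\mathbf 1$ is the all-ones weight vector.
   Context: A realization of a graph $G$ on $n$ vertices is a tuple $(S_1,\dots,S_n)$ of Pauli strings (tensor products of matrices from $\{I,X,Y,Z\}$) of common length with $S_i,S_j$ anticommuting iff $i\sim j$ and commuting otherwise. $\beta(G,w)=\sup_\rho\sum_iw_i\operatorname{tr}(\rho S_i)^2$ over density matrices $\rho$ (independent of the realization); $\alpha(G,w)=\max\{\sum_{i\in I}w_i:I\text{ independent}\}$. (For instance, in vertex order $0,\dots,6$, the strings $Z_1,\ X_1X_2,\ Z_2,\ Y_1X_2X_3,\ Y_1Z_3,\ Z_1Y_2,\ X_1$ on three qubits, where subscripts indicate the qubit acted on, realize $G_7$.) *)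

theory Defs
  imports "HOL-Analysis.Analysis" "HOL-Library.Complex_Order"
begin

datatype pauli = PI | PX | PY | PZ

fun pmat :: "pauli \<Rightarrow> nat \<Rightarrow> nat \<Rightarrow> complex" where
  "pmat PI r c = (if r = c then 1 else 0)"
| "pmat PX r c = (if r \<noteq> c then 1 else 0)"
| "pmat PY r c = (if r = c then 0 else if r = 0 then - \<i> else \<i>)"
| "pmat PZ r c = (if r = c then (if r = 0 then 1 else -1) else 0)"

(* Square matrices of dimension d are represented as functions on indices < d *)
type_synonym cmat = "nat \<Rightarrow> nat \<Rightarrow> complex"

(* Matrix of a Pauli string (tensor product); qubit k corresponds to bit k of the index *)
definition pstring_mat :: "pauli list \<Rightarrow> cmat" where
  "pstring_mat P r c = (\<Prod>k<length P. pmat (P ! k) (r div 2 ^ k mod 2) (c div 2 ^ k mod 2))"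

definition mmul :: "nat \<Rightarrow> cmat \<Rightarrow> cmat \<Rightarrow> cmat" where
  "mmul d A B i j = (\<Sum>k<d. A i k * B k j)"

definition mtrace :: "nat \<Rightarrow> cmat \<Rightarrow> complex" where
  "mtrace d A = (\<Sum>i<d. A i i)"

definition density :: "nat \<Rightarrow> cmat \<Rightarrow> bool" where
  "density d \<rho> \<longleftrightarrow>
     (\<forall>i<d. \<forall>j<d. \<rho> j i = cnj (\<rho> i j)) \<and>
     (\<forall>v :: nat \<Rightarrow> complex. (0::complex) \<le> (\<Sum>i<d. \<Sum>j<d. cnj (v i) * \<rho> i j * v j)) \<and>
     mtrace d \<rho> = 1"

definition anticommute :: "nat \<Rightarrow> cmat \<Rightarrow> cmat \<Rightarrow> bool" where
  "anticommute d A B \<longleftrightarrow> (\<forall>i<d. \<forall>j<d. mmul d A B i j = - mmul d B A i j)"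

definition commute :: "nat \<Rightarrow> cmat \<Rightarrow> cmat \<Rightarrow> bool" where
  "commute d A B \<longleftrightarrow> (\<forall>i<d. \<forall>j<d. mmul d A B i j = mmul d B A i j)"

definition realization :: "(nat \<Rightarrow> nat \<Rightarrow> bool) \<Rightarrow> nat \<Rightarrow> (nat \<Rightarrow> pauli list) \<Rightarrow> nat \<Rightarrow> bool" where
  "realization G n S m \<longleftrightarrow>
     (\<forall>i<n. length (S i) = m) \<and>
     (\<forall>i<n. \<forall>j<n. i \<noteq> j \<longrightarrow>
        (G i j \<longrightarrow> anticommute (2 ^ m) (pstring_mat (S i)) (pstring_mat (S j))) \<and>
        (\<not> G i j \<longrightarrow> commute (2 ^ m) (pstring_mat (S i)) (pstring_mat (S j))))"

definition beta :: "nat \<Rightarrow> (nat \<Rightarrow> real) \<Rightarrow> (nat \<Rightarrow> pauli list) \<Rightarrow> nat \<Rightarrow> real" where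
  "beta n w S m = Sup {(\<Sum>i<n. w i * (Re (mtrace (2 ^ m) (mmul (2 ^ m) \<rho> (pstring_mat (S i)))))^2)
                       | \<rho>. density (2 ^ m) \<rho>}"

definition independent :: "(nat \<Rightarrow> nat \<Rightarrow> bool) \<Rightarrow> nat set \<Rightarrow> bool" where
  "independent G I \<longleftrightarrow> (\<forall>i\<in>I. \<forall>j\<in>I. \<not> G i j)"

definition alpha :: "(nat \<Rightarrow> nat \<Rightarrow> bool) \<Rightarrow> nat \<Rightarrow> (nat \<Rightarrow> real) \<Rightarrow> real" where
  "alpha G n w = Max {(\<Sum>i\<in>I. w i) | I. I \<subseteq> {..<n} \<and> independent G I}"

definition G7_edges :: "(nat \<times> nat) set" where
  "G7_edges = {(0,1),(1,2),(2,3),(3,4),(4,5),(5,6),(6,0),(0,3),(0,4),(1,3),(1,4),(6,3),(6,4),(2,5)}"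

definition G7 :: "nat \<Rightarrow> nat \<Rightarrow> bool" where
  "G7 i j \<longleftrightarrow> (i, j) \<in> G7_edges \<or> (j, i) \<in> G7_edges"

end

theory Submission
  imports Defs
begin

(*
  All that matters about the realizing matrices A_0, ..., A_6 is that they are Hermitian
  involutions which anticommute exactly along the edges of G_7.

  Upper bound: W = A_1 A_6 is again a Hermitian involution; it commutes with the pairwise
  anticommuting A_0, A_1, A_3, A_4, anticommutes with A_2 and A_5, and W A_1 = A_6.
  For pairwise anticommuting Hermitian involutions B_i commuting with a projector P one has
  sum_i <P B_i>^2 <= <P>^2, because X = sum_i <P B_i> B_i squares to a multiple of the
  identity and <P (X - t)^2> >= 0 for all real t.  Applied to the projectors (1 +- W)/2 this
  gives <A_0>^2 + <A_1>^2 + <A_3>^2 + <A_4>^2 + <A_6>^2 <= 1 + <W>^2, and applied to the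
  anticommuting triple A_2, A_5, W with P = 1 it gives <A_2>^2 + <A_5>^2 + <W>^2 <= 1.

  Lower bound: A_0 and A_2 commute, and A_0, A_2, A_0 A_2 are traceless since each of them
  anticommutes with an involution (A_1 resp. A_4).  Hence the normalized projector onto the
  joint +1 eigenspace of A_0 and A_2 is a state with <A_0> = <A_2> = 1.
*)

subsection \<open>Matrices of Pauli strings\<close>

lemma sum_lessThan_double:
  "(\<Sum>c<2 * (n::nat). g c) = (\<Sum>c<n. g (2 * c) + g (2 * c + 1))"
  by (induction n) (simp_all add: algebra_simps)

lemma sum_bits_prod:
  fixes f :: "nat \<Rightarrow> nat \<Rightarrow> 'a::comm_semiring_1"
  shows "(\<Sum>c<2 ^ m. \<Prod>k<m. f k (c div 2 ^ k mod 2)) = (\<Prod>k<m. f k 0 + f k 1)"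
proof (induction m arbitrary: f)
  case 0
  then show ?case by simp
next
  case (Suc m)
  have "(\<Sum>c<2 ^ Suc m. \<Prod>k<Suc m. f k (c div 2 ^ k mod 2))
      = (\<Sum>c<2 ^ m. (\<Prod>k<Suc m. f k (2 * c div 2 ^ k mod 2))
                     + (\<Prod>k<Suc m. f k ((2 * c + 1) div 2 ^ k mod 2)))"
    by (simp add: sum_lessThan_double)
  also have "\<dots> = (\<Sum>c<2 ^ m. (f 0 0 + f 0 1) * (\<Prod>k<m. f (Suc k) (c div 2 ^ k mod 2)))"
    by (simp only: prod.lessThan_Suc_shift) (simp add: div_mult2_eq, simp add: algebra_simps)
  also have "\<dots> = (f 0 0 + f 0 1) * (\<Prod>k<m. f (Suc k) 0 + f (Suc k) 1)"
    by (simp add: sum_distrib_left[symmetric] Suc.IH[of "\<lambda>k. f (Suc k)"])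
  also have "\<dots> = (\<Prod>k<Suc m. f k 0 + f k 1)"
    by (simp only: prod.lessThan_Suc_shift)
  finally show ?case .
qed

definition pauli_mul :: "pauli \<Rightarrow> pauli \<Rightarrow> nat \<Rightarrow> nat \<Rightarrow> complex" where
  "pauli_mul p q a b = pmat p a 0 * pmat q 0 b + pmat p a 1 * pmat q 1 b"

definition pauli_sign :: "pauli \<Rightarrow> pauli \<Rightarrow> complex" where
  "pauli_sign p q = (if p = PI \<or> q = PI \<or> p = q then 1 else -1)"

lemma pauli_mul_swap: "a < 2 \<Longrightarrow> b < 2 \<Longrightarrow> pauli_mul p q a b = pauli_sign p q * pauli_mul q p a b"
  by (cases p; cases q) (auto simp: less_2_cases_iff pauli_mul_def pauli_sign_def)

lemma pauli_mul_self: "a < 2 \<Longrightarrow> b < 2 \<Longrightarrow> pauli_mul p p a b = (if a = b then 1 else 0)"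
  by (cases p) (auto simp: less_2_cases_iff pauli_mul_def)

lemma cnj_pmat: "a < 2 \<Longrightarrow> b < 2 \<Longrightarrow> cnj (pmat p a b) = pmat p b a"
  by (cases p) (auto simp: less_2_cases_iff)

lemma mmul_pstring_mat:
  assumes "length P = m" "length Q = m"
  shows "mmul (2 ^ m) (pstring_mat P) (pstring_mat Q) r s
       = (\<Prod>k<m. pauli_mul (P ! k) (Q ! k) (r div 2 ^ k mod 2) (s div 2 ^ k mod 2))"
proof -
  have "mmul (2 ^ m) (pstring_mat P) (pstring_mat Q) r s
      = (\<Sum>c<2 ^ m. \<Prod>k<m. pmat (P ! k) (r div 2 ^ k mod 2) (c div 2 ^ k mod 2)
                            * pmat (Q ! k) (c div 2 ^ k mod 2) (s div 2 ^ k mod 2))"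
    unfolding mmul_def pstring_mat_def using assms by (simp add: prod.distrib)
  also have "\<dots> = (\<Prod>k<m. pauli_mul (P ! k) (Q ! k) (r div 2 ^ k mod 2) (s div 2 ^ k mod 2))"
    by (subst sum_bits_prod) (simp add: pauli_mul_def)
  finally show ?thesis .
qed

lemma mmul_pstring_mat_swap:
  assumes "length P = m" "length Q = m"
  shows "mmul (2 ^ m) (pstring_mat P) (pstring_mat Q) r s
       = (\<Prod>k<m. pauli_sign (P ! k) (Q ! k)) * mmul (2 ^ m) (pstring_mat Q) (pstring_mat P) r s"
proof -
  have "pauli_mul (P ! k) (Q ! k) (r div 2 ^ k mod 2) (s div 2 ^ k mod 2)
      = pauli_sign (P ! k) (Q ! k) * pauli_mul (Q ! k) (P ! k) (r div 2 ^ k mod 2) (s div 2 ^ k mod 2)"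
    for k by (rule pauli_mul_swap) auto
  then show ?thesis
    using assms by (simp only: mmul_pstring_mat prod.distrib)
qed

lemma nat_eq_if_low_bits_eq:
  fixes r s :: nat
  assumes "r < 2 ^ m" "s < 2 ^ m" "\<forall>k<m. r div 2 ^ k mod 2 = s div 2 ^ k mod 2"
  shows "r = s"
proof -
  have "bit r k = bit s k" if "k < m" for k
    using assms(3) that by (simp add: bit_iff_odd odd_iff_mod_2_eq_one)
  then have "take_bit m r = take_bit m s"
    by (intro bit_eqI) (auto simp: bit_take_bit_iff)
  then show ?thesis
    using assms(1,2) by (simp add: take_bit_nat_eq_self)
qed

lemma mmul_pstring_mat_self:
  assumes "length P = m" "r < 2 ^ m" "s < 2 ^ m"
  shows "mmul (2 ^ m) (pstring_mat P) (pstring_mat P) r s = (if r = s then 1 else 0)"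
proof -
  have "mmul (2 ^ m) (pstring_mat P) (pstring_mat P) r s
      = (\<Prod>k<m. if r div 2 ^ k mod 2 = s div 2 ^ k mod 2 then 1 else 0)"
    using assms(1) by (simp add: mmul_pstring_mat pauli_mul_self)
  then show ?thesis
    using nat_eq_if_low_bits_eq[OF assms(2,3)] by simp blast
qed

lemma cnj_pstring_mat: "cnj (pstring_mat P r c) = pstring_mat P c r"
  unfolding pstring_mat_def by (simp add: cnj_pmat)

subsection \<open>Matrix algebra\<close>

text \<open>
  A d \<times> d matrix is a \<^typ>\<open>cmat\<close> vanishing outside {..<d} \<times> {..<d}; \<^term>\<open>mmul d\<close>
  never looks at the entries outside, so a Pauli string matrix is first cut down by
  \<^term>\<open>mtrunc d\<close>.
\<close>

definition zero_outside :: "nat \<Rightarrow> cmat \<Rightarrow> bool" where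
  "zero_outside d A \<longleftrightarrow> (\<forall>i j. \<not> (i < d \<and> j < d) \<longrightarrow> A i j = 0)"

definition mtrunc :: "nat \<Rightarrow> cmat \<Rightarrow> cmat" where
  "mtrunc d A i j = (if i < d \<and> j < d then A i j else 0)"

definition mone :: "nat \<Rightarrow> cmat" where
  "mone d i j = (if i < d \<and> i = j then 1 else 0)"

definition madj :: "cmat \<Rightarrow> cmat" where
  "madj A i j = cnj (A j i)"

definition madd :: "cmat \<Rightarrow> cmat \<Rightarrow> cmat" where
  "madd A B i j = A i j + B i j"

definition mscale :: "complex \<Rightarrow> cmat \<Rightarrow> cmat" where
  "mscale c A i j = c * A i j"

definition msum :: "('a \<Rightarrow> cmat) \<Rightarrow> 'a set \<Rightarrow> cmat" where
  "msum f I i j = (\<Sum>k\<in>I. f k i j)"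

definition expect :: "nat \<Rightarrow> cmat \<Rightarrow> cmat \<Rightarrow> complex" where
  "expect d \<rho> M = mtrace d (mmul d \<rho> M)"

lemma mmul_assoc: "mmul d (mmul d A B) C = mmul d A (mmul d B C)"
proof (intro ext)
  fix i j
  have "mmul d (mmul d A B) C i j = (\<Sum>k<d. \<Sum>l<d. A i l * B l k * C k j)"
    unfolding mmul_def by (simp add: sum_distrib_right)
  also have "\<dots> = (\<Sum>l<d. \<Sum>k<d. A i l * B l k * C k j)"
    by (rule sum.swap)
  also have "\<dots> = mmul d A (mmul d B C) i j"
    unfolding mmul_def by (simp add: sum_distrib_left mult.assoc)
  finally show "mmul d (mmul d A B) C i j = mmul d A (mmul d B C) i j" .
qed

lemma mmul_madd_left: "mmul d (madd A B) C = madd (mmul d A C) (mmul d B C)"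
  unfolding mmul_def madd_def fun_eq_iff by (simp add: algebra_simps sum.distrib)

lemma mmul_madd_right: "mmul d C (madd A B) = madd (mmul d C A) (mmul d C B)"
  unfolding mmul_def madd_def fun_eq_iff by (simp add: algebra_simps sum.distrib)

lemma mmul_mscale_left: "mmul d (mscale c A) B = mscale c (mmul d A B)"
  unfolding mmul_def mscale_def fun_eq_iff by (simp add: algebra_simps sum_distrib_left)

lemma mmul_mscale_right: "mmul d A (mscale c B) = mscale c (mmul d A B)"
  unfolding mmul_def mscale_def fun_eq_iff by (simp add: algebra_simps sum_distrib_left)

lemma mmul_msum_left: "mmul d (msum f I) B = msum (\<lambda>k. mmul d (f k) B) I"
  unfolding mmul_def msum_def fun_eq_iff by (simp add: sum_distrib_right) (intro allI sum.swap)

lemma mmul_msum_right: "mmul d A (msum f I) = msum (\<lambda>k. mmul d A (f k)) I"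
  unfolding mmul_def msum_def fun_eq_iff by (simp add: sum_distrib_left) (intro allI sum.swap)

lemma msum_cong: "(\<And>k. k \<in> I \<Longrightarrow> f k = g k) \<Longrightarrow> msum f I = msum g I"
  unfolding msum_def fun_eq_iff by simp

lemmas mmul_distribs =
  mmul_madd_left mmul_madd_right mmul_mscale_left mmul_mscale_right mmul_msum_left mmul_msum_right

lemma mscale_mscale: "mscale a (mscale b A) = mscale (a * b) A"
  unfolding mscale_def by (simp add: fun_eq_iff mult.assoc)

lemma mscale_one [simp]: "mscale 1 A = A"
  unfolding mscale_def by simp

lemma madj_mmul: "madj (mmul d A B) = mmul d (madj B) (madj A)"
  unfolding madj_def mmul_def fun_eq_iff by (simp add: mult.commute)

lemma madj_madd: "madj (madd A B) = madd (madj A) (madj B)"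
  unfolding madj_def madd_def fun_eq_iff by simp

lemma madj_mscale: "madj (mscale c A) = mscale (cnj c) (madj A)"
  unfolding madj_def mscale_def fun_eq_iff by simp

lemma madj_msum: "madj (msum f I) = msum (\<lambda>k. madj (f k)) I"
  unfolding madj_def msum_def fun_eq_iff by simp

lemma madj_mone: "madj (mone d) = mone d"
  unfolding madj_def mone_def fun_eq_iff by simp

lemma zero_outside_mmul: "zero_outside d A \<Longrightarrow> zero_outside d B \<Longrightarrow> zero_outside d (mmul d A B)"
  unfolding zero_outside_def mmul_def by auto

lemma zero_outside_madd: "zero_outside d A \<Longrightarrow> zero_outside d B \<Longrightarrow> zero_outside d (madd A B)"
  unfolding zero_outside_def madd_def by auto

lemma zero_outside_mscale: "zero_outside d A \<Longrightarrow> zero_outside d (mscale c A)"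
  unfolding zero_outside_def mscale_def by auto

lemma zero_outside_msum: "(\<And>k. k \<in> I \<Longrightarrow> zero_outside d (f k)) \<Longrightarrow> zero_outside d (msum f I)"
  unfolding zero_outside_def msum_def by auto

lemma zero_outside_mone: "zero_outside d (mone d)"
  unfolding zero_outside_def mone_def by auto

lemma zero_outside_mtrunc: "zero_outside d (mtrunc d A)"
  unfolding zero_outside_def mtrunc_def by auto

lemma mmul_mone_left:
  assumes "zero_outside d A"
  shows "mmul d (mone d) A = A"
proof (intro ext)
  fix i j
  show "mmul d (mone d) A i j = A i j"
  proof (cases "i < d")
    case True
    then have "mmul d (mone d) A i j = (\<Sum>k<d. if k = i then A k j else 0)"
      unfolding mmul_def mone_def by (intro sum.cong) auto
    then show ?thesis using True by simp
  next
    case False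
    then have "A i j = 0"
      using assms by (simp add: zero_outside_def)
    with False show ?thesis
      by (simp add: mmul_def mone_def)
  qed
qed

lemma mmul_mone_right:
  assumes "zero_outside d A"
  shows "mmul d A (mone d) = A"
proof (intro ext)
  fix i j
  show "mmul d A (mone d) i j = A i j"
  proof (cases "j < d")
    case True
    then have "mmul d A (mone d) i j = (\<Sum>k<d. if k = j then A i k else 0)"
      unfolding mmul_def mone_def by (intro sum.cong) auto
    then show ?thesis using True by simp
  next
    case False
    then have "A i j = 0"
      using assms by (simp add: zero_outside_def)
    with False show ?thesis
      by (simp add: mmul_def mone_def)
  qed
qed

lemma mmul_mtrunc: "mmul d (mtrunc d A) (mtrunc d B) = mtrunc d (mmul d A B)"
  unfolding mtrunc_def mmul_def fun_eq_iff by auto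

lemma madj_mtrunc: "madj (mtrunc d A) = mtrunc d (madj A)"
  unfolding madj_def mtrunc_def fun_eq_iff by simp

lemma mtrace_madd: "mtrace d (madd A B) = mtrace d A + mtrace d B"
  unfolding mtrace_def madd_def by (simp add: sum.distrib)

lemma mtrace_mscale: "mtrace d (mscale c A) = c * mtrace d A"
  unfolding mtrace_def mscale_def by (simp add: sum_distrib_left)

lemma mtrace_mone: "mtrace d (mone d) = of_nat d"
  unfolding mtrace_def mone_def by simp

lemma mtrace_mmul_commute: "mtrace d (mmul d A B) = mtrace d (mmul d B A)"
  unfolding mtrace_def mmul_def by (subst sum.swap) (simp add: mult.commute)

lemma expect_madd: "expect d \<rho> (madd A B) = expect d \<rho> A + expect d \<rho> B"
  unfolding expect_def by (simp add: mmul_madd_right mtrace_madd)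

lemma expect_mscale: "expect d \<rho> (mscale c A) = c * expect d \<rho> A"
  unfolding expect_def by (simp add: mmul_mscale_right mtrace_mscale)

lemma expect_msum: "expect d \<rho> (msum f I) = (\<Sum>k\<in>I. expect d \<rho> (f k))"
  unfolding expect_def mtrace_def by (simp add: mmul_msum_right msum_def) (rule sum.swap)

lemma expect_mtrunc: "expect d \<rho> (mtrunc d A) = expect d \<rho> A"
  unfolding expect_def mtrace_def mmul_def mtrunc_def by simp

lemma expect_mone:
  assumes "density d \<rho>"
  shows "expect d \<rho> (mone d) = 1"
proof -
  have "expect d \<rho> (mone d) = (\<Sum>i<d. \<Sum>k<d. if k = i then \<rho> i k else 0)"
    unfolding expect_def mtrace_def mmul_def mone_def by (intro sum.cong refl) auto
  moreover have "mtrace d \<rho> = 1"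
    using assms by (simp only: density_def)
  ultimately show ?thesis
    by (simp add: mtrace_def)
qed

lemmas expect_linear = expect_madd expect_mscale expect_msum

lemma cnj_mult_self_nonneg: "0 \<le> cnj z * (z::complex)"
  by (simp add: less_eq_complex_def)

lemma expect_madj_mmul_nonneg:
  assumes "density d \<rho>"
  shows "0 \<le> expect d \<rho> (mmul d (madj C) C)"
proof -
  have "expect d \<rho> (mmul d (madj C) C)
      = (\<Sum>i<d. \<Sum>k<d. \<Sum>l<d. cnj (cnj (C l i)) * \<rho> i k * cnj (C l k))"
    unfolding expect_def mtrace_def mmul_def madj_def by (simp add: sum_distrib_left mult_ac)
  also have "\<dots> = (\<Sum>i<d. \<Sum>l<d. \<Sum>k<d. cnj (cnj (C l i)) * \<rho> i k * cnj (C l k))"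
    by (intro sum.cong refl sum.swap)
  also have "\<dots> = (\<Sum>l<d. \<Sum>i<d. \<Sum>k<d. cnj (cnj (C l i)) * \<rho> i k * cnj (C l k))"
    by (rule sum.swap)
  also have "0 \<le> \<dots>"
  proof -
    have psd: "0 \<le> (\<Sum>i<d. \<Sum>j<d. cnj (v i) * \<rho> i j * v j)" for v
      using assms unfolding density_def by blast
    show ?thesis
      by (rule sum_nonneg, rule psd)
  qed
  finally show ?thesis .
qed

lemma quadratic_form_madj_mmul_nonneg:
  "0 \<le> (\<Sum>i<d. \<Sum>j<d. cnj (v i) * mmul d (madj C) C i j * v j)"
proof -
  have "(\<Sum>i<d. \<Sum>j<d. cnj (v i) * mmul d (madj C) C i j * v j)
      = (\<Sum>i<d. \<Sum>j<d. \<Sum>l<d. cnj (v i) * cnj (C l i) * C l j * v j)"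
    unfolding mmul_def madj_def by (simp add: sum_distrib_left sum_distrib_right mult_ac)
  also have "\<dots> = (\<Sum>i<d. \<Sum>l<d. \<Sum>j<d. cnj (v i) * cnj (C l i) * C l j * v j)"
    by (intro sum.cong refl sum.swap)
  also have "\<dots> = (\<Sum>l<d. \<Sum>i<d. \<Sum>j<d. cnj (v i) * cnj (C l i) * C l j * v j)"
    by (rule sum.swap)
  also have "\<dots> = (\<Sum>l<d. cnj (\<Sum>i<d. C l i * v i) * (\<Sum>j<d. C l j * v j))"
    by (simp add: sum_distrib_left sum_distrib_right mult_ac)
  also have "0 \<le> \<dots>"
    by (intro sum_nonneg cnj_mult_self_nonneg)
  finally show ?thesis .
qed

subsection \<open>Hermitian involutions and projectors\<close>

definition herm_involution :: "nat \<Rightarrow> cmat \<Rightarrow> bool" where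
  "herm_involution d A \<longleftrightarrow> zero_outside d A \<and> madj A = A \<and> mmul d A A = mone d"

definition projector :: "nat \<Rightarrow> cmat \<Rightarrow> bool" where
  "projector d P \<longleftrightarrow> zero_outside d P \<and> madj P = P \<and> mmul d P P = P"

definition plus_projector :: "nat \<Rightarrow> cmat \<Rightarrow> cmat" where
  "plus_projector d W = mscale (1 / 2) (madd (mone d) W)"

lemma herm_involution_mscale_neg:
  "herm_involution d A \<Longrightarrow> herm_involution d (mscale (-1) A)"
  unfolding herm_involution_def
  by (simp add: zero_outside_mscale madj_mscale mmul_mscale_left mmul_mscale_right mscale_mscale)

lemma herm_involution_mmul:
  assumes A: "herm_involution d A" and B: "herm_involution d B"
    and AB: "mmul d A B = mmul d B A"
  shows "herm_involution d (mmul d A B)"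
proof -
  have "mmul d B (mmul d A B) = mmul d A (mmul d B B)"
    by (simp add: mmul_assoc[symmetric] AB[symmetric])
  then have "mmul d (mmul d A B) (mmul d A B) = mmul d (mmul d A A) (mmul d B B)"
    by (simp add: mmul_assoc)
  also have "\<dots> = mone d"
    using A B by (simp add: herm_involution_def mmul_mone_left zero_outside_mone)
  finally show ?thesis
    using A B by (simp add: herm_involution_def zero_outside_mmul madj_mmul AB)
qed

lemma projector_mone: "projector d (mone d)"
  by (simp add: projector_def zero_outside_mone madj_mone mmul_mone_left)

lemma projector_plus_projector:
  assumes W: "herm_involution d W"
  shows "projector d (plus_projector d W)"
proof -
  have WI: "zero_outside d W" "madj W = W" "mmul d W W = mone d"
    using W by (simp_all add: herm_involution_def)
  have "mmul d (madd (mone d) W) (madd (mone d) W) = mscale 2 (madd (mone d) W)"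
    using WI by (simp add: mmul_madd_left mmul_madd_right mmul_mone_left mmul_mone_right
        zero_outside_mone) (simp add: madd_def mscale_def fun_eq_iff)
  then show ?thesis
    using WI by (simp add: projector_def plus_projector_def zero_outside_mscale zero_outside_madd
        zero_outside_mone madj_mscale madj_madd madj_mone mmul_mscale_left mmul_mscale_right
        mscale_mscale)
qed

lemma plus_projector_mmul_commute:
  "zero_outside d B \<Longrightarrow> mmul d W B = mmul d B W
    \<Longrightarrow> mmul d (plus_projector d W) B = mmul d B (plus_projector d W)"
  unfolding plus_projector_def by (simp add: mmul_distribs mmul_mone_left mmul_mone_right)

lemma plus_projector_mmul_self:
  assumes "herm_involution d W"
  shows "mmul d (plus_projector d W) W = plus_projector d W"
proof -
  have "mmul d (madd (mone d) W) W = madd (mone d) W"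
    using assms by (simp add: herm_involution_def mmul_madd_left mmul_mone_left)
      (simp add: madd_def fun_eq_iff add.commute)
  then show ?thesis
    by (simp add: plus_projector_def mmul_mscale_left)
qed

lemma projector_mmul:
  assumes P: "projector d P" and Q: "projector d Q" and PQ: "mmul d P Q = mmul d Q P"
  shows "projector d (mmul d P Q)"
proof -
  have "mmul d Q (mmul d P Q) = mmul d P (mmul d Q Q)"
    by (simp add: mmul_assoc[symmetric] PQ[symmetric])
  then have "mmul d (mmul d P Q) (mmul d P Q) = mmul d (mmul d P P) (mmul d Q Q)"
    by (simp add: mmul_assoc)
  then show ?thesis
    using P Q PQ by (simp add: projector_def zero_outside_mmul madj_mmul)
qed

lemma trace_eq_0_if_anticommute:
  assumes A: "zero_outside d A" and C: "mmul d C C = mone d"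
    and AC: "mmul d A C = mscale (-1) (mmul d C A)"
  shows "mtrace d A = 0"
proof -
  have "mtrace d A = mtrace d (mmul d (mmul d A C) C)"
    by (simp add: mmul_assoc C mmul_mone_right A)
  also have "\<dots> = mtrace d (mmul d C (mmul d A C))"
    by (rule mtrace_mmul_commute)
  also have "\<dots> = - mtrace d (mmul d C (mmul d C A))"
    by (simp add: AC mmul_mscale_left mmul_mscale_right mtrace_mscale)
  also have "\<dots> = - mtrace d A"
    by (simp add: mmul_assoc[symmetric] C mmul_mone_left A)
  finally show ?thesis by simp
qed

lemma anticommute_sym:
  "mmul d A B = mscale (-1) (mmul d B A) \<Longrightarrow> mmul d B A = mscale (-1) (mmul d A B)"
  by (simp add: mscale_mscale)

lemma mmul_mmul_sign:
  assumes "mmul d X Y = mscale a (mmul d Y X)" "mmul d X Z = mscale b (mmul d Z X)"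
  shows "mmul d X (mmul d Y Z) = mscale (a * b) (mmul d (mmul d Y Z) X)"
  by (simp add: mmul_assoc[symmetric] assms(1) mmul_mscale_left)
    (simp add: mmul_assoc assms(2) mmul_mscale_right mscale_mscale)

subsection \<open>Expectation bounds\<close>

lemma sum_antisym_offdiag:
  fixes g :: "'i \<Rightarrow> 'i \<Rightarrow> 'a::ab_group_add"
  assumes "finite I" and "\<And>i j. i \<in> I \<Longrightarrow> j \<in> I \<Longrightarrow> i \<noteq> j \<Longrightarrow> g i j + g j i = 0"
  shows "(\<Sum>i\<in>I. \<Sum>j\<in>I. g i j) = (\<Sum>i\<in>I. g i i)"
  using assms
proof (induction I rule: finite_induct)
  case empty
  then show ?case by simp
next
  case (insert a I)
  have "(\<Sum>i\<in>insert a I. \<Sum>j\<in>insert a I. g i j)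
      = g a a + (\<Sum>j\<in>I. g a j + g j a) + (\<Sum>i\<in>I. \<Sum>j\<in>I. g i j)"
    using insert.hyps by (simp add: sum.distrib add_ac)
  also have "(\<Sum>j\<in>I. g a j + g j a) = 0"
    using insert.hyps insert.prems by (intro sum.neutral) blast
  also have "(\<Sum>i\<in>I. \<Sum>j\<in>I. g i j) = (\<Sum>i\<in>I. g i i)"
    using insert.prems by (intro insert.IH) blast
  finally show ?case
    using insert.hyps by simp
qed

lemma mmul_anticommuting_sum_self:
  fixes x :: "'i \<Rightarrow> real"
  assumes "finite I"
    and B: "\<And>i. i \<in> I \<Longrightarrow> herm_involution d (B i)"
    and anti: "\<And>i j. i \<in> I \<Longrightarrow> j \<in> I \<Longrightarrow> i \<noteq> j \<Longrightarrow> mmul d (B i) (B j) = mscale (-1) (mmul d (B j) (B i))"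
  defines "X \<equiv> msum (\<lambda>i. mscale (of_real (x i)) (B i)) I"
  shows "mmul d X X = mscale (of_real (\<Sum>i\<in>I. (x i)\<^sup>2)) (mone d)"
proof (intro ext)
  fix a b
  have "mmul d X X a b = (\<Sum>j\<in>I. \<Sum>i\<in>I. of_real (x i * x j) * mmul d (B i) (B j) a b)"
    unfolding X_def mmul_distribs by (simp add: msum_def mscale_def sum_distrib_left mult_ac)
  also have "\<dots> = (\<Sum>i\<in>I. of_real (x i * x i) * mmul d (B i) (B i) a b)"
  proof (rule sum_antisym_offdiag[OF \<open>finite I\<close>])
    fix j i
    assume "j \<in> I" "i \<in> I" "j \<noteq> i"
    then have "mmul d (B i) (B j) = mscale (-1) (mmul d (B j) (B i))"
      by (intro anti) auto
    then show "of_real (x i * x j) * mmul d (B i) (B j) a b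
        + of_real (x j * x i) * mmul d (B j) (B i) a b = 0"
      by (simp add: mscale_def)
  qed
  also have "\<dots> = mscale (of_real (\<Sum>i\<in>I. (x i)\<^sup>2)) (mone d) a b"
    using B by (simp add: herm_involution_def mscale_def sum_distrib_right power2_eq_square)
  finally show "mmul d X X a b = mscale (of_real (\<Sum>i\<in>I. (x i)\<^sup>2)) (mone d) a b" .
qed

lemma le_square_if_quadratic_nonneg:
  fixes s p :: real
  assumes quadratic: "\<And>t. 0 \<le> s * p - 2 * t * s + t\<^sup>2 * p" and "0 \<le> s"
  shows "s \<le> p\<^sup>2"
proof -
  have "0 \<le> s * p" "0 \<le> s * p - 2 * s + p" "0 \<le> p * (p\<^sup>2 - s)"
    using quadratic[of 0] quadratic[of 1] quadratic[of p]
    by (simp_all add: algebra_simps power2_eq_square)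
  then show ?thesis
    using \<open>0 \<le> s\<close> by (cases "p > 0") (auto simp: zero_le_mult_iff not_less)
qed

lemma expect_projector_square_nonneg:
  assumes "density d \<rho>" "projector d P" "madj E = E" "mmul d P E = mmul d E P"
  shows "0 \<le> Re (expect d \<rho> (mmul d P (mmul d E E)))"
proof -
  have "mmul d (madj (mmul d P E)) (mmul d P E) = mmul d P (mmul d E E)"
    using assms(2-4) unfolding projector_def madj_mmul
    by (metis mmul_assoc)
  then show ?thesis
    using expect_madj_mmul_nonneg[OF assms(1), of "mmul d P E"] by (simp add: less_eq_complex_def)
qed

lemma anticommuting_expect_bound:
  assumes dens: "density d \<rho>" and P: "projector d P" and "finite I"
    and B: "\<And>i. i \<in> I \<Longrightarrow> herm_involution d (B i)"
    and PB: "\<And>i. i \<in> I \<Longrightarrow> mmul d P (B i) = mmul d (B i) P"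
    and anti: "\<And>i j. i \<in> I \<Longrightarrow> j \<in> I \<Longrightarrow> i \<noteq> j \<Longrightarrow> mmul d (B i) (B j) = mscale (-1) (mmul d (B j) (B i))"
  shows "(\<Sum>i\<in>I. (Re (expect d \<rho> (mmul d P (B i))))\<^sup>2) \<le> (Re (expect d \<rho> P))\<^sup>2"
proof -
  define x where "x i = Re (expect d \<rho> (mmul d P (B i)))" for i
  define s where "s = (\<Sum>i\<in>I. (x i)\<^sup>2)"
  define p where "p = Re (expect d \<rho> P)"
  define X where "X = msum (\<lambda>i. mscale (of_real (x i)) (B i)) I"
  have XX: "mmul d X X = mscale (of_real s) (mone d)"
    unfolding X_def s_def using \<open>finite I\<close> B anti by (rule mmul_anticommuting_sum_self)
  have PX: "Re (expect d \<rho> (mmul d P X)) = s"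
    unfolding X_def s_def by (simp add: mmul_distribs expect_linear x_def power2_eq_square)
  have X: "zero_outside d X" "madj X = X" "mmul d P X = mmul d X P"
    unfolding X_def using B PB
    by (auto simp: herm_involution_def madj_msum madj_mscale mmul_distribs
        intro!: zero_outside_msum zero_outside_mscale msum_cong)
  have "0 \<le> s * p - 2 * t * s + t\<^sup>2 * p" for t :: real
  proof -
    define E where "E = madd X (mscale (- of_real t) (mone d))"
    have "madj E = E" "mmul d P E = mmul d E P"
      using P X by (simp_all add: E_def madj_madd madj_mscale madj_mone mmul_distribs
          mmul_mone_left mmul_mone_right projector_def)
    moreover have "mmul d E E = madd (mscale (of_real s) (mone d))
        (madd (mscale (- 2 * of_real t) X) (mscale (of_real (t\<^sup>2)) (mone d)))"
      using X(1) by (simp add: E_def XX mmul_distribs mmul_mone_left mmul_mone_right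
          zero_outside_mone mscale_mscale) (simp add: madd_def mscale_def fun_eq_iff algebra_simps power2_eq_square)
    then have "Re (expect d \<rho> (mmul d P (mmul d E E))) = s * p - 2 * t * s + t\<^sup>2 * p"
      using P by (simp add: mmul_distribs mmul_mone_right projector_def expect_linear PX p_def)
    ultimately show ?thesis
      using expect_projector_square_nonneg[OF dens P] by metis
  qed
  then have "s \<le> p\<^sup>2"
    by (rule le_square_if_quadratic_nonneg) (simp add: s_def sum_nonneg)
  then show ?thesis
    unfolding s_def x_def p_def .
qed

lemma anticommuting_expect_bound_mone:
  assumes "density d \<rho>" "finite I"
    and B: "\<And>i. i \<in> I \<Longrightarrow> herm_involution d (B i)"
    and "\<And>i j. i \<in> I \<Longrightarrow> j \<in> I \<Longrightarrow> i \<noteq> j \<Longrightarrow> mmul d (B i) (B j) = mscale (-1) (mmul d (B j) (B i))"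
  shows "(\<Sum>i\<in>I. (Re (expect d \<rho> (B i)))\<^sup>2) \<le> 1"
proof -
  have "zero_outside d (B i)" if "i \<in> I" for i
    using B[OF that] by (simp add: herm_involution_def)
  then show ?thesis
    using anticommuting_expect_bound[OF assms(1) projector_mone assms(2-3) _ assms(4)]
    by (simp add: mmul_mone_left mmul_mone_right expect_mone[OF assms(1)])
qed

lemma sum_squares_half_sum_diff:
  fixes x y :: real
  shows "((x + y) / 2)\<^sup>2 + ((x - y) / 2)\<^sup>2 = (x\<^sup>2 + y\<^sup>2) / 2"
  by (simp add: power2_eq_square field_simps)

lemma anticommuting_expect_bound_split:
  assumes dens: "density d \<rho>" and W: "herm_involution d W" and "finite I"
    and B: "\<And>i. i \<in> I \<Longrightarrow> herm_involution d (B i)"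
    and WB: "\<And>i. i \<in> I \<Longrightarrow> mmul d W (B i) = mmul d (B i) W"
    and anti: "\<And>i j. i \<in> I \<Longrightarrow> j \<in> I \<Longrightarrow> i \<noteq> j \<Longrightarrow> mmul d (B i) (B j) = mscale (-1) (mmul d (B j) (B i))"
  shows "(\<Sum>i\<in>I. (Re (expect d \<rho> (B i)))\<^sup>2 + (Re (expect d \<rho> (mmul d W (B i))))\<^sup>2)
    \<le> 1 + (Re (expect d \<rho> W))\<^sup>2"
proof -
  define f where "f M = Re (expect d \<rho> M)" for M
  have bound: "(\<Sum>i\<in>I. ((f (B i) + c * f (mmul d W (B i))) / 2)\<^sup>2) \<le> ((1 + c * f W) / 2)\<^sup>2"
    if c: "c = 1 \<or> c = -1" for c :: real
  proof -
    define V where "V = mscale (of_real c) W"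
    have V: "herm_involution d V"
      using c W herm_involution_mscale_neg by (auto simp: V_def)
    have B0: "zero_outside d (B i)" if "i \<in> I" for i
      using B[OF that] by (simp add: herm_involution_def)
    have "(\<Sum>i\<in>I. (Re (expect d \<rho> (mmul d (plus_projector d V) (B i))))\<^sup>2)
        \<le> (Re (expect d \<rho> (plus_projector d V)))\<^sup>2"
    proof (rule anticommuting_expect_bound[OF dens projector_plus_projector[OF V] \<open>finite I\<close> B _ anti])
      fix i
      assume "i \<in> I"
      then show "mmul d (plus_projector d V) (B i) = mmul d (B i) (plus_projector d V)"
        using B0 WB by (intro plus_projector_mmul_commute) (simp_all add: V_def mmul_distribs)
    qed
    then show ?thesis
      using B0 by (simp add: f_def plus_projector_def V_def mmul_distribs mmul_mone_left
          expect_linear expect_mone[OF dens] add_divide_distrib)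
  qed
  have "(\<Sum>i\<in>I. ((f (B i) + f (mmul d W (B i))) / 2)\<^sup>2 + ((f (B i) - f (mmul d W (B i))) / 2)\<^sup>2)
      \<le> ((1 + f W) / 2)\<^sup>2 + ((1 - f W) / 2)\<^sup>2"
    using bound[of 1] bound[of "-1"] by (simp add: sum.distrib)
  then show ?thesis
    by (simp add: sum_squares_half_sum_diff f_def flip: sum_divide_distrib)
qed

lemma density_mscale_projector:
  assumes P: "projector d P" and trace: "mtrace d P = of_real c" and "0 < c"
  shows "density d (mscale (of_real (1 / c)) P)"
proof -
  have herm: "madj P = P" and idem: "mmul d P P = P"
    using P by (simp_all add: projector_def)
  have "0 \<le> (\<Sum>i<d. \<Sum>j<d. cnj (v i) * mscale (of_real (1 / c)) P i j * v j)" for v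
  proof -
    have "0 \<le> (of_real (1 / c) :: complex)"
      using \<open>0 < c\<close> by (simp add: less_eq_complex_def)
    moreover have "0 \<le> (\<Sum>i<d. \<Sum>j<d. cnj (v i) * P i j * v j)"
      using quadratic_form_madj_mmul_nonneg[where C = P and v = v and d = d] by (simp add: herm idem)
    ultimately have "0 \<le> of_real (1 / c) * (\<Sum>i<d. \<Sum>j<d. cnj (v i) * P i j * v j)"
      by (rule mult_nonneg_nonneg)
    then show ?thesis
      by (simp add: mscale_def sum_distrib_left mult_ac)
  qed
  moreover have "mscale (of_real (1 / c)) P j i = cnj (mscale (of_real (1 / c)) P i j)" for i j
    using herm[THEN fun_cong, THEN fun_cong, of j i] by (simp add: madj_def mscale_def)
  moreover have "mtrace d (mscale (of_real (1 / c)) P) = 1"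
    using trace \<open>0 < c\<close> by (simp add: mtrace_mscale)
  ultimately show ?thesis
    unfolding density_def by blast
qed

lemma commuting_traceless_expect_one:
  assumes "0 < d" and A: "herm_involution d A" and B: "herm_involution d B"
    and AB: "mmul d A B = mmul d B A"
    and trace: "mtrace d A = 0" "mtrace d B = 0" "mtrace d (mmul d A B) = 0"
  obtains \<rho> where "density d \<rho>" "expect d \<rho> A = 1" "expect d \<rho> B = 1"
proof -
  have A0: "zero_outside d A" and B0: "zero_outside d B"
    using A B by (simp_all add: herm_involution_def)
  define Q where "Q = mmul d (plus_projector d A) (plus_projector d B)"
  have PB_A: "mmul d (plus_projector d B) A = mmul d A (plus_projector d B)"
    using A0 AB[symmetric] by (rule plus_projector_mmul_commute)
  have "projector d Q"
    unfolding Q_def using A B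
    by (intro projector_mmul projector_plus_projector plus_projector_mmul_commute)
      (simp_all add: herm_involution_def plus_projector_def zero_outside_mscale zero_outside_madd
        zero_outside_mone mmul_distribs mmul_mone_left mmul_mone_right AB)
  moreover have "mtrace d Q = of_real (real d / 4)"
    unfolding Q_def plus_projector_def using A0 B0
    by (simp add: mmul_distribs mmul_mone_left mmul_mone_right zero_outside_mone mtrace_mscale
        mtrace_madd mtrace_mone trace)
  moreover have "mmul d Q A = Q"
  proof -
    have "mmul d Q A = mmul d (plus_projector d A) (mmul d A (plus_projector d B))"
      by (simp only: Q_def mmul_assoc PB_A)
    also have "\<dots> = Q"
      by (simp only: Q_def mmul_assoc[symmetric] plus_projector_mmul_self[OF A])
    finally show ?thesis .
  qed
  moreover have "mmul d Q B = Q"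
    by (simp only: Q_def mmul_assoc plus_projector_mmul_self[OF B])
  moreover have "0 < real d / 4"
    using \<open>0 < d\<close> by simp
  ultimately show ?thesis
    using \<open>0 < d\<close> by (intro that[of "mscale (of_real (1 / (real d / 4))) Q"] density_mscale_projector)
      (simp_all add: expect_def mmul_mscale_left mtrace_mscale mult.commute)
qed

subsection \<open>The graph G7\<close>

lemma sum_lessThan_7: "(\<Sum>i<(7::nat). g i) = g 0 + g 1 + g 2 + g 3 + g 4 + g 5 + (g 6 :: 'a::comm_monoid_add)"
  by (simp add: eval_nat_numeral ac_simps)

lemma G7_product_1_6:
  assumes A: "\<And>i. i < 7 \<Longrightarrow> herm_involution d (A i)"
    and AR: "\<And>i j. i < 7 \<Longrightarrow> j < 7 \<Longrightarrow> i \<noteq> j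
      \<Longrightarrow> mmul d (A i) (A j) = mscale (if G7 i j then -1 else 1) (mmul d (A j) (A i))"
  defines "W \<equiv> mmul d (A 1) (A 6)"
  shows "herm_involution d W" "mmul d W (A 1) = A 6"
    and "\<And>k. k \<in> {0, 1, 3, 4} \<Longrightarrow> mmul d W (A k) = mmul d (A k) W"
    and "\<And>k. k \<in> {2, 5} \<Longrightarrow> mmul d (A k) W = mscale (-1) (mmul d W (A k))"
proof -
  have A16: "mmul d (A 1) (A 6) = mmul d (A 6) (A 1)"
    using AR[of 1 6] by (simp add: G7_def G7_edges_def)
  show "herm_involution d W"
    unfolding W_def using A[of 1] A[of 6] A16 by (simp add: herm_involution_mmul)
  have "mmul d W (A 1) = mmul d (mmul d (A 1) (A 1)) (A 6)"
    by (simp only: W_def A16[symmetric] mmul_assoc)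
  then show "mmul d W (A 1) = A 6"
    using A[of 1] A[of 6] by (simp add: herm_involution_def mmul_mone_left)
  have sign: "mmul d (A k) W
      = mscale ((if G7 k 1 then -1 else 1) * (if G7 k 6 then -1 else 1)) (mmul d W (A k))"
    if "k < 7" "k \<noteq> 1" "k \<noteq> 6" for k
    unfolding W_def using that by (intro mmul_mmul_sign AR) auto
  show "mmul d W (A k) = mmul d (A k) W" if "k \<in> {0, 1, 3, 4}" for k
  proof (cases "k = 1")
    case True
    then show ?thesis
      unfolding W_def using mmul_mmul_sign[of d "A 1" "A 1" 1 "A 6" 1] A16 by simp
  next
    case False
    then show ?thesis
      using sign[of k] that by (auto simp: G7_def G7_edges_def)
  qed
  show "mmul d (A k) W = mscale (-1) (mmul d W (A k))" if "k \<in> {2, 5}" for k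
    using sign[of k] that by (auto simp: G7_def G7_edges_def)
qed

lemma G7_expect_bound:
  assumes dens: "density d \<rho>"
    and A: "\<And>i. i < 7 \<Longrightarrow> herm_involution d (A i)"
    and AR: "\<And>i j. i < 7 \<Longrightarrow> j < 7 \<Longrightarrow> i \<noteq> j
      \<Longrightarrow> mmul d (A i) (A j) = mscale (if G7 i j then -1 else 1) (mmul d (A j) (A i))"
  shows "(\<Sum>i<7. (Re (expect d \<rho> (A i)))\<^sup>2) \<le> 2"
proof -
  define f where "f M = Re (expect d \<rho> M)" for M
  define W where "W = mmul d (A 1) (A 6)"
  note W = G7_product_1_6[OF A AR, folded W_def]
  have "(\<Sum>i\<in>{0, 1, 3, 4}. (f (A i))\<^sup>2 + (f (mmul d W (A i)))\<^sup>2) \<le> 1 + (f W)\<^sup>2"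
    unfolding f_def
  proof (rule anticommuting_expect_bound_split[OF dens W(1)])
    fix i j :: nat
    assume "i \<in> {0, 1, 3, 4}" "j \<in> {0, 1, 3, 4}" "i \<noteq> j"
    then show "mmul d (A i) (A j) = mscale (-1) (mmul d (A j) (A i))"
      using AR[of i j] by (auto simp: G7_def G7_edges_def)
  qed (use A W(3) in auto)
  moreover have "(\<Sum>i\<in>{2, 5, 7}. (f ((A(7 := W)) i))\<^sup>2) \<le> 1"
    unfolding f_def
  proof (rule anticommuting_expect_bound_mone[OF dens])
    fix i j :: nat
    assume "i \<in> {2, 5, 7}" "j \<in> {2, 5, 7}" "i \<noteq> j"
    then show "mmul d ((A(7 := W)) i) ((A(7 := W)) j) = mscale (-1) (mmul d ((A(7 := W)) j) ((A(7 := W)) i))"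
      using AR[of 2 5] AR[of 5 2] W(4)[of 2] W(4)[of 5] anticommute_sym[OF W(4)[of 2]]
        anticommute_sym[OF W(4)[of 5]]
      by (auto simp: G7_def G7_edges_def)
  qed (use A W(1) in auto)
  ultimately show ?thesis
    unfolding sum_lessThan_7 f_def[symmetric]
    by (simp add: W(2)[unfolded One_nat_def])
      (use zero_le_power2[of "f (mmul d W (A 0))"] zero_le_power2[of "f (mmul d W (A 3))"]
        zero_le_power2[of "f (mmul d W (A 4))"] in linarith)
qed

lemma G7_expect_attained:
  assumes "0 < d"
    and A: "\<And>i. i < 7 \<Longrightarrow> herm_involution d (A i)"
    and AR: "\<And>i j. i < 7 \<Longrightarrow> j < 7 \<Longrightarrow> i \<noteq> j
      \<Longrightarrow> mmul d (A i) (A j) = mscale (if G7 i j then -1 else 1) (mmul d (A j) (A i))"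
  obtains \<rho> where "density d \<rho>" "2 \<le> (\<Sum>i<7. (Re (expect d \<rho> (A i)))\<^sup>2)"
proof -
  have A0: "zero_outside d (A i)" "mmul d (A i) (A i) = mone d" if "i < 7" for i
    using A[OF that] by (simp_all add: herm_involution_def)
  have "mtrace d (A 0) = 0"
    using AR[of 0 1] by (intro trace_eq_0_if_anticommute[of _ _ "A 1"] A0) (simp_all add: G7_def G7_edges_def)
  moreover have "mtrace d (A 2) = 0"
    using AR[of 2 1] by (intro trace_eq_0_if_anticommute[of _ _ "A 1"] A0) (simp_all add: G7_def G7_edges_def)
  moreover have "mtrace d (mmul d (A 0) (A 2)) = 0"
  proof (rule trace_eq_0_if_anticommute[of _ _ "A 4"])
    have "mmul d (A 4) (mmul d (A 0) (A 2)) = mscale (-1) (mmul d (mmul d (A 0) (A 2)) (A 4))"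
      using mmul_mmul_sign[OF AR[of 4 0] AR[of 4 2]] by (simp add: G7_def G7_edges_def)
    then show "mmul d (mmul d (A 0) (A 2)) (A 4) = mscale (-1) (mmul d (A 4) (mmul d (A 0) (A 2)))"
      by (rule anticommute_sym)
  qed (simp_all add: A0 zero_outside_mmul)
  moreover have "mmul d (A 0) (A 2) = mmul d (A 2) (A 0)"
    using AR[of 0 2] by (simp add: G7_def G7_edges_def)
  ultimately obtain \<rho> where \<rho>: "density d \<rho>" "expect d \<rho> (A 0) = 1" "expect d \<rho> (A 2) = 1"
    using commuting_traceless_expect_one[OF \<open>0 < d\<close> A[of 0] A[of 2]] by auto
  then have "2 \<le> (\<Sum>i<7. (Re (expect d \<rho> (A i)))\<^sup>2)"
    unfolding sum_lessThan_7 by simp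
  with \<rho>(1) show ?thesis
    by (rule that)
qed

subsection \<open>Realizations\<close>

lemma realization_herm_involution:
  assumes "realization G n S m" "i < n"
  shows "herm_involution (2 ^ m) (mtrunc (2 ^ m) (pstring_mat (S i)))"
proof -
  have "length (S i) = m"
    using assms by (simp add: realization_def)
  then have "mmul (2 ^ m) (mtrunc (2 ^ m) (pstring_mat (S i))) (mtrunc (2 ^ m) (pstring_mat (S i)))
      = mone (2 ^ m)"
    by (auto simp: mmul_mtrunc mtrunc_def mone_def fun_eq_iff mmul_pstring_mat_self)
  moreover have "madj (pstring_mat (S i)) = pstring_mat (S i)"
    by (simp add: madj_def cnj_pstring_mat fun_eq_iff)
  ultimately show ?thesis
    by (simp add: herm_involution_def zero_outside_mtrunc madj_mtrunc)
qed

lemma mmul_mtrunc_anticommute: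
  "anticommute d A B \<Longrightarrow> mmul d (mtrunc d A) (mtrunc d B) = mscale (-1) (mmul d (mtrunc d B) (mtrunc d A))"
  unfolding mmul_mtrunc anticommute_def by (auto simp: fun_eq_iff mtrunc_def mscale_def)

lemma mmul_mtrunc_commute:
  "commute d A B \<Longrightarrow> mmul d (mtrunc d A) (mtrunc d B) = mmul d (mtrunc d B) (mtrunc d A)"
  unfolding mmul_mtrunc commute_def by (auto simp: fun_eq_iff mtrunc_def)

lemma realization_mmul_sign:
  assumes "realization G n S m" "i < n" "j < n" "i \<noteq> j"
  defines "A \<equiv> \<lambda>i. mtrunc (2 ^ m) (pstring_mat (S i))"
  shows "mmul (2 ^ m) (A i) (A j) = mscale (if G i j then -1 else 1) (mmul (2 ^ m) (A j) (A i))"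
proof (cases "G i j")
  case True
  then have "anticommute (2 ^ m) (pstring_mat (S i)) (pstring_mat (S j))"
    using assms(1-4) by (simp add: realization_def)
  then have "mmul (2 ^ m) (A i) (A j) = mscale (-1) (mmul (2 ^ m) (A j) (A i))"
    unfolding A_def by (rule mmul_mtrunc_anticommute)
  with True show ?thesis
    by simp
next
  case False
  then have "commute (2 ^ m) (pstring_mat (S i)) (pstring_mat (S j))"
    using assms(1-4) by (simp add: realization_def)
  then have "mmul (2 ^ m) (A i) (A j) = mmul (2 ^ m) (A j) (A i)"
    unfolding A_def by (rule mmul_mtrunc_commute)
  with False show ?thesis
    by simp
qed

lemma beta_G7:
  assumes R: "realization G7 7 S m"
  shows "beta 7 (\<lambda>_. 1) S m = 2"
proof -
  define A where "A i = mtrunc (2 ^ m) (pstring_mat (S i))" for i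
  have A: "herm_involution (2 ^ m) (A i)" if "i < 7" for i
    unfolding A_def using R that by (rule realization_herm_involution)
  have AR: "mmul (2 ^ m) (A i) (A j) = mscale (if G7 i j then -1 else 1) (mmul (2 ^ m) (A j) (A i))"
    if "i < 7" "j < 7" "i \<noteq> j" for i j
    unfolding A_def using R that by (rule realization_mmul_sign)
  have expect_eq: "Re (mtrace (2 ^ m) (mmul (2 ^ m) \<rho> (pstring_mat (S i)))) = Re (expect (2 ^ m) \<rho> (A i))"
    for \<rho> i by (simp only: A_def expect_mtrunc) (simp add: expect_def)
  show ?thesis
    unfolding beta_def expect_eq
  proof (rule cSup_eq_maximum)
    have "0 < (2 :: nat) ^ m"
      by simp
    then obtain \<rho> where \<rho>: "density (2 ^ m) \<rho>" "2 \<le> (\<Sum>i<7. (Re (expect (2 ^ m) \<rho> (A i)))\<^sup>2)"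
      by (rule G7_expect_attained[OF _ A AR])
    moreover have "(\<Sum>i<7. (Re (expect (2 ^ m) \<rho> (A i)))\<^sup>2) \<le> 2"
      by (rule G7_expect_bound[OF \<rho>(1) A AR])
    ultimately show "2 \<in> {\<Sum>i<7. (\<lambda>_. 1) i * (Re (expect (2 ^ m) \<rho> (A i)))\<^sup>2 | \<rho>. density (2 ^ m) \<rho>}"
      by force
  next
    fix x
    assume "x \<in> {\<Sum>i<7. (\<lambda>_. 1) i * (Re (expect (2 ^ m) \<rho> (A i)))\<^sup>2 | \<rho>. density (2 ^ m) \<rho>}"
    then show "x \<le> 2"
      using G7_expect_bound[OF _ A AR] by auto
  qed
qed

lemma pstring_mat_anticommute_if_sign:
  assumes "length P = m" "length Q = m" "(\<Prod>k<m. pauli_sign (P ! k) (Q ! k)) = -1"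
  shows "anticommute (2 ^ m) (pstring_mat P) (pstring_mat Q)"
  unfolding anticommute_def using mmul_pstring_mat_swap[OF assms(1,2)] assms(3) by simp

lemma pstring_mat_commute_if_sign:
  assumes "length P = m" "length Q = m" "(\<Prod>k<m. pauli_sign (P ! k) (Q ! k)) = 1"
  shows "commute (2 ^ m) (pstring_mat P) (pstring_mat Q)"
  unfolding commute_def using mmul_pstring_mat_swap[OF assms(1,2)] assms(3) by simp

lemma less_7_iff: "i < (7::nat) \<longleftrightarrow> i = 0 \<or> i = 1 \<or> i = 2 \<or> i = 3 \<or> i = 4 \<or> i = 5 \<or> i = 6"
  by auto

definition G7_paulis :: "nat \<Rightarrow> pauli list" where
  "G7_paulis i = [[PZ, PI, PI], [PX, PX, PI], [PI, PZ, PI], [PY, PX, PX], [PY, PI, PZ], [PZ, PY, PI],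
    [PX, PI, PI]] ! i"

lemma G7_paulis_sign:
  assumes "i < 7" "j < 7" "i \<noteq> j"
  shows "(\<Prod>k<3. pauli_sign (G7_paulis i ! k) (G7_paulis j ! k)) = (if G7 i j then -1 else 1)"
  using assms unfolding less_7_iff
  by (elim disjE) (simp_all add: G7_paulis_def pauli_sign_def G7_def G7_edges_def eval_nat_numeral)

lemma realization_G7_paulis: "realization G7 7 G7_paulis 3"
  unfolding realization_def
proof (intro conjI allI impI)
  fix i :: nat
  assume "i < 7"
  then show "length (G7_paulis i) = 3"
    by (auto simp: G7_paulis_def less_Suc_eq eval_nat_numeral)
next
  fix i j :: nat
  assume ij: "i < 7" "j < 7" "i \<noteq> j"
  then have "length (G7_paulis i) = 3" "length (G7_paulis j) = 3"
    by (auto simp: G7_paulis_def less_Suc_eq eval_nat_numeral)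
  then show "G7 i j \<Longrightarrow> anticommute (2 ^ 3) (pstring_mat (G7_paulis i)) (pstring_mat (G7_paulis j))"
    and "\<not> G7 i j \<Longrightarrow> commute (2 ^ 3) (pstring_mat (G7_paulis i)) (pstring_mat (G7_paulis j))"
    using G7_paulis_sign[OF ij]
    by (simp_all add: pstring_mat_anticommute_if_sign pstring_mat_commute_if_sign del: power_numeral)
qed

subsection \<open>Independent sets\<close>

lemma G7_no_independent_triple:
  assumes "a < 7" "b < 7" "c < 7" "a \<noteq> b" "a \<noteq> c" "b \<noteq> c"
  shows "G7 a b \<or> G7 a c \<or> G7 b c"
  using assms unfolding less_7_iff by (elim disjE) (simp_all add: G7_def G7_edges_def)

lemma card_independent_G7:
  assumes "I \<subseteq> {..<7}" "independent G7 I"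
  shows "card I \<le> 2"
proof (rule ccontr)
  assume "\<not> card I \<le> 2"
  then have "3 \<le> card I"
    by simp
  then obtain T where "T \<subseteq> I" "card T = 3"
    by (meson obtain_subset_with_card_n)
  then obtain a b c where "{a, b, c} \<subseteq> I" "a \<noteq> b" "a \<noteq> c" "b \<noteq> c"
    by (auto simp: card_3_iff)
  then show False
    using G7_no_independent_triple[of a b c] assms unfolding independent_def by auto
qed

lemma alpha_G7: "alpha G7 7 (\<lambda>_. 1) = 2"
proof -
  define indeps where "indeps = {I. I \<subseteq> {..<7} \<and> independent G7 I}"
  have "{\<Sum>i\<in>I. (\<lambda>_. 1 :: real) i | I. I \<subseteq> {..<7} \<and> independent G7 I} = (\<lambda>I. real (card I)) ` indeps"
    by (auto simp: indeps_def)
  moreover have "Max ((\<lambda>I. real (card I)) ` indeps) = 2"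
  proof (rule Max_eqI)
    show "finite ((\<lambda>I. real (card I)) ` indeps)"
      by (rule finite_imageI, rule finite_subset[of _ "Pow {..<7}"]) (auto simp: indeps_def)
    show "y \<le> 2" if "y \<in> (\<lambda>I. real (card I)) ` indeps" for y
      using that card_independent_G7 by (fastforce simp: indeps_def)
    have "{0, 2} \<in> indeps"
      by (auto simp: indeps_def independent_def G7_def G7_edges_def)
    then show "2 \<in> (\<lambda>I. real (card I)) ` indeps"
      by (rule rev_image_eqI) simp
  qed
  ultimately show ?thesis
    unfolding alpha_def by simp
qed

theorem mainTheorem15:
  shows "(\<exists>S m. realization G7 7 S m)
       \<and> (\<forall>S m. realization G7 7 S m \<longrightarrow> beta 7 (\<lambda>_. 1) S m = 2)
       \<and> alpha G7 7 (\<lambda>_. 1) = 2"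
  using realization_G7_paulis beta_G7 alpha_G7 by blast

end
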